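(* Let $P$ be a probability measure on $(\Omega,\mathcal{M})$, $\tau:\Omega\to[0,\infty]$ measurable, and $Q\in\mathcal{U}^\Lambda(P)$ for some $\Lambda:[0,\infty)\to[0,\infty]$ with $\Lambda(0)=0$ that is finite on a neighborhood of $0$. Then $$\log\Big[\int\tau\,dQ\Big]\le\inf_{c>1}\Big\{\frac1c\log\Big[\int\tau^c\,dP\Big]+\frac{c-1}{c}\Lambda\big(1/(c-1)\big)\Big\},$$ with the convention $-\infty+\infty=\infty$.
   Context: $\tau^c=\exp(c\log\tau)$ with continuous extensions of $\exp,\log$ to extended reals. $\Lambda_Q^f(\lambda)=\log E_Q[e^{\lambda f}]$. $\mathcal{U}^\Lambda(P)=\{Q \text{ probability measure}: Q\ll P,\ \Lambda_Q^{\log(dQ/dP)}(\lambda)\le\Lambda(\lambda)\ \text{for all }\lambda>0\}$. *)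

theory Defs
  imports "HOL-Probability.Probability"
begin

definition ext_log :: "ennreal \<Rightarrow> ereal" where
  "ext_log x = (if x = 0 then - \<infinity> else if x = \<infinity> then \<infinity> else ereal (ln (enn2real x)))"

definition ext_exp :: "ereal \<Rightarrow> ennreal" where
  "ext_exp y = (if y = - \<infinity> then 0 else if y = \<infinity> then \<infinity> else ennreal (exp (real_of_ereal y)))"

definition ext_pow :: "ennreal \<Rightarrow> real \<Rightarrow> ennreal" where
  "ext_pow t c = ext_exp (ereal c * ext_log t)"

definition cgf :: "'a measure \<Rightarrow> ('a \<Rightarrow> ereal) \<Rightarrow> real \<Rightarrow> ereal" where
  "cgf Q f l = ext_log (\<integral>\<^sup>+ \<omega>. ext_exp (ereal l * f \<omega>) \<partial>Q)"

definition U_set :: "(real \<Rightarrow> ereal) \<Rightarrow> 'a measure \<Rightarrow> 'a measure set" where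
  "U_set \<Lambda> P = {Q. prob_space Q \<and> sets Q = sets P \<and> absolutely_continuous P Q \<and>
      (\<forall>l>0. cgf Q (\<lambda>\<omega>. ext_log (RN_deriv P Q \<omega>)) l \<le> \<Lambda> l)}"

end

theory Submission
  imports Defs
begin

text \<open>Write \<open>Z = dQ/dP\<close> and let \<open>q = c/(c - 1)\<close> be the exponent conjugate to \<open>c\<close>.
  Changing measure, \<open>\<integral>\<tau> dQ = \<integral>\<tau> Z dP\<close>, and Hoelder's inequality with exponents \<open>c\<close> and \<open>q\<close>
  bounds its logarithm by \<open>(1/c) log \<integral>\<tau>^c dP + (1/q) log \<integral>Z^q dP\<close>. Changing measure back,
  \<open>\<integral>Z^q dP = \<integral>Z^(1/(c - 1)) dQ\<close>, whose logarithm is the cumulant generating function of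
  \<open>log Z\<close> under \<open>Q\<close> at \<open>1/(c - 1)\<close>, hence at most \<open>\<Lambda>(1/(c - 1))\<close>; and \<open>1/q = (c - 1)/c\<close>.\<close>

lemma ext_pow_eq:
  assumes "c > 0"
  shows "ext_pow x c = (if x = \<infinity> then \<infinity> else ennreal (enn2real x powr c))"
proof (cases x rule: ennreal_cases)
  case (real r)
  then show ?thesis
    using assms by (cases "r = 0") (auto simp: ext_pow_def ext_log_def ext_exp_def powr_def)
qed (use assms in \<open>simp add: ext_pow_def ext_log_def ext_exp_def\<close>)

lemma borel_measurable_ext_pow [measurable]:
  assumes "c > 0" "f \<in> borel_measurable M"
  shows "(\<lambda>x. ext_pow (f x) c) \<in> borel_measurable M"
  unfolding ext_pow_eq[OF assms(1)] using assms(2) by measurable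

lemma ext_pow_eq_0_iff:
  assumes "c > 0"
  shows "ext_pow x c = 0 \<longleftrightarrow> x = 0"
  using assms by (cases x rule: ennreal_cases) (auto simp: ext_pow_eq)

lemma mult_ext_pow:
  assumes "l > 0"
  shows "x * ext_pow x l = ext_pow x (l + 1)"
proof (cases x rule: ennreal_cases)
  case (real r)
  then show ?thesis
    using assms by (cases "r = 0") (auto simp: ext_pow_eq ennreal_mult[symmetric] powr_add)
qed (use assms in \<open>simp add: ext_pow_eq\<close>)

lemma ext_log_mono:
  assumes "x \<le> y"
  shows "ext_log x \<le> ext_log y"
proof (cases x rule: ennreal_cases)
  case (real r)
  then show ?thesis
    using assms by (cases y rule: ennreal_cases) (auto simp: ext_log_def )
qed (use assms in \<open>auto simp: ext_log_def top_unique\<close>)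

lemma ext_log_ennreal: "r > 0 \<Longrightarrow> ext_log (ennreal r) = ereal (ln r)"
  by (simp add: ext_log_def)

text \<open>Young's inequality applied to \<open>x / a^(1/p)\<close> and \<open>y / b^(1/q)\<close>; the weights are chosen so
  that integrating against \<open>\<integral>x^p = a\<close>, \<open>\<integral>y^q = b\<close> yields exactly \<open>a^(1/p) b^(1/q)\<close>.\<close>

lemma Youngs_inequality_weighted:
  fixes x y a b p q :: real
  assumes "x \<ge> 0" "y \<ge> 0" "a > 0" "b > 0" "p > 1" "q > 1" "1/p + 1/q = 1"
  shows "x * y \<le> (a powr (1/p) * b powr (1/q) / (p * a)) * x powr p
               + (a powr (1/p) * b powr (1/q) / (q * b)) * y powr q"
proof -
  define K where "K = a powr (1/p) * b powr (1/q)"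
  define A where "A = x / a powr (1/p)"
  define B where "B = y / b powr (1/q)"
  have "A \<ge> 0" "B \<ge> 0"
    using assms by (auto simp: A_def B_def)
  then have "A * B \<le> A powr p / p + B powr q / q"
    using Youngs_inequality[OF assms(5-7)] by blast
  moreover have "A powr p = x powr p / a" "B powr q = y powr q / b"
    using assms by (simp_all add: A_def B_def powr_divide powr_powr)
  moreover have "x * y = K * (A * B)" "K > 0"
    using assms by (simp_all add: A_def B_def K_def)
  ultimately have "x * y \<le> K * (x powr p / a / p + y powr q / b / q)"
    by (metis mult_le_cancel_left_pos)
  then show ?thesis
    by (simp add: K_def distrib_left mult.commute)
qed

lemma Youngs_inequality_weighted_ennreal:
  fixes x y :: ennreal and a b p q :: real
  assumes "a > 0" "b > 0" "p > 1" "q > 1" "1/p + 1/q = 1"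
  shows "x * y \<le> ennreal (a powr (1/p) * b powr (1/q) / (p * a)) * ext_pow x p
               + ennreal (a powr (1/p) * b powr (1/q) / (q * b)) * ext_pow y q"
    (is "_ \<le> ennreal ?\<alpha> * _ + ennreal ?\<beta> * _")
proof -
  have weights: "?\<alpha> > 0" "?\<beta> > 0"
    using assms by auto
  show ?thesis
  proof (cases "x = \<infinity> \<or> y = \<infinity>")
    case True
    with weights assms show ?thesis
      by (auto simp: ext_pow_eq ennreal_mult_eq_top_iff)
  next
    case False
    then obtain r s where rs: "x = ennreal r" "y = ennreal s" "r \<ge> 0" "s \<ge> 0"
      by (cases x rule: ennreal_cases; cases y rule: ennreal_cases) auto
    have "ennreal (r * s) \<le> ennreal (?\<alpha> * r powr p + ?\<beta> * s powr q)"
      by (rule ennreal_leI) (rule Youngs_inequality_weighted[OF rs(3,4) assms])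
    also have "\<dots> = ennreal ?\<alpha> * ext_pow x p + ennreal ?\<beta> * ext_pow y q"
      using weights assms rs by (simp add: ext_pow_eq flip: ennreal_mult)
    finally show ?thesis
      using rs by (simp add: ennreal_mult)
  qed
qed

lemma nn_integral_Holder:
  fixes f g :: "'a \<Rightarrow> ennreal" and a b p q :: real
  assumes [measurable]: "f \<in> borel_measurable M" "g \<in> borel_measurable M"
    and pq: "p > 1" "q > 1" "1/p + 1/q = 1"
    and a: "(\<integral>\<^sup>+x. ext_pow (f x) p \<partial>M) = ennreal a" "a > 0"
    and b: "(\<integral>\<^sup>+x. ext_pow (g x) q \<partial>M) = ennreal b" "b > 0"
  shows "(\<integral>\<^sup>+x. f x * g x \<partial>M) \<le> ennreal (a powr (1/p) * b powr (1/q))"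
proof -
  define K where "K = a powr (1/p) * b powr (1/q)"
  have "K > 0" "p > 0" "q > 0"
    using a b pq by (auto simp: K_def)
  have "(\<integral>\<^sup>+x. f x * g x \<partial>M) \<le> (\<integral>\<^sup>+x. ennreal (K / (p * a)) * ext_pow (f x) p
      + ennreal (K / (q * b)) * ext_pow (g x) q \<partial>M)"
    by (rule nn_integral_mono)
       (use Youngs_inequality_weighted_ennreal[OF a(2) b(2) pq] in \<open>simp add: K_def\<close>)
  also have "\<dots> = ennreal (K / (p * a)) * ennreal a + ennreal (K / (q * b)) * ennreal b"
    using \<open>p > 0\<close> \<open>q > 0\<close> a b by (simp add: nn_integral_add nn_integral_cmult)
  also have "\<dots> = ennreal (K * (1/p + 1/q))"
    using \<open>K > 0\<close> \<open>p > 0\<close> \<open>q > 0\<close> a b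
    by (simp add: ennreal_mult[symmetric] ennreal_plus[symmetric] field_simps)
  finally show ?thesis
    using pq by (simp add: K_def)
qed

text \<open>Hoelder's inequality in logarithmic form, valid without any integrability assumption
  thanks to the conventions \<open>log 0 = -\<infinity>\<close>, \<open>log \<infinity> = \<infinity>\<close> and \<open>-\<infinity> + \<infinity> = \<infinity>\<close>.\<close>

lemma ext_log_nn_integral_Holder:
  fixes f g :: "'a \<Rightarrow> ennreal" and p q :: real
  assumes [measurable]: "f \<in> borel_measurable M" "g \<in> borel_measurable M"
    and pq: "p > 1" "q > 1" "1/p + 1/q = 1"
  shows "ext_log (\<integral>\<^sup>+x. f x * g x \<partial>M) \<le>
     ereal (1/p) * ext_log (\<integral>\<^sup>+x. ext_pow (f x) p \<partial>M)
   + ereal (1/q) * ext_log (\<integral>\<^sup>+x. ext_pow (g x) q \<partial>M)"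
proof -
  define F where "F = (\<integral>\<^sup>+x. ext_pow (f x) p \<partial>M)"
  define G where "G = (\<integral>\<^sup>+x. ext_pow (g x) q \<partial>M)"
  have "p > 0" "q > 0"
    using pq by auto
  consider (zero) "F = 0 \<or> G = 0" | (infinite) "F = \<infinity> \<or> G = \<infinity>"
    | (finite) a b where "F = ennreal a" "a > 0" "G = ennreal b" "b > 0"
    by (cases F rule: ennreal_cases; cases G rule: ennreal_cases) (auto simp: le_less)
  then show ?thesis
  proof cases
    case zero
    then have "AE x in M. ext_pow (f x) p = 0 \<or> ext_pow (g x) q = 0"
      unfolding F_def G_def using \<open>p > 0\<close> \<open>q > 0\<close> by (auto simp: nn_integral_0_iff_AE)
    then have "AE x in M. f x * g x = 0"
      by eventually_elim (use \<open>p > 0\<close> \<open>q > 0\<close> in \<open>auto simp: ext_pow_eq_0_iff\<close>)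
    then have "(\<integral>\<^sup>+x. f x * g x \<partial>M) = 0"
      by (simp add: nn_integral_0_iff_AE)
    then show ?thesis
      by (simp add: ext_log_def)
  next
    case infinite
    then show ?thesis
      using \<open>p > 0\<close> \<open>q > 0\<close> by (auto simp: ext_log_def F_def[symmetric] G_def[symmetric])
  next
    case finite
    then have "ext_log (\<integral>\<^sup>+x. f x * g x \<partial>M) \<le> ext_log (ennreal (a powr (1/p) * b powr (1/q)))"
      by (intro ext_log_mono nn_integral_Holder) (auto simp: F_def G_def pq)
    also have "\<dots> = ereal (1/p) * ext_log F + ereal (1/q) * ext_log G"
      using finite by (simp add: ext_log_ennreal ln_mult)
    finally show ?thesis
      by (simp add: F_def G_def)
  qed
qed

lemma (in sigma_finite_measure) cgf_ext_log_RN_deriv: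
  assumes "absolutely_continuous M N" "sets N = sets M" "l > 0"
  shows "cgf N (\<lambda>x. ext_log (RN_deriv M N x)) l = ext_log (\<integral>\<^sup>+x. ext_pow (RN_deriv M N x) (l + 1) \<partial>M)"
proof -
  have "(\<integral>\<^sup>+x. ext_pow (RN_deriv M N x) l \<partial>N) = (\<integral>\<^sup>+x. ext_pow (RN_deriv M N x) (l + 1) \<partial>M)"
    using assms by (simp add: RN_deriv_nn_integral mult_ext_pow)
  then show ?thesis
    by (simp add: cgf_def ext_pow_def)
qed

theorem mainTheorem11:
  fixes P Q :: "'a measure" and \<tau> :: "'a \<Rightarrow> ennreal" and \<Lambda> :: "real \<Rightarrow> ereal"
  assumes "prob_space P"
    and "\<tau> \<in> borel_measurable P"
    and "\<forall>l\<ge>0. \<Lambda> l \<ge> 0"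
    and "\<Lambda> 0 = 0"
    and "\<exists>\<delta>>0. \<forall>l. 0 \<le> l \<and> l < \<delta> \<longrightarrow> \<Lambda> l < \<infinity>"
    and "Q \<in> U_set \<Lambda> P"
  shows "ext_log (\<integral>\<^sup>+ \<omega>. \<tau> \<omega> \<partial>Q) \<le>
    (INF c \<in> {1<..}. ereal (1 / c) * ext_log (\<integral>\<^sup>+ \<omega>. ext_pow (\<tau> \<omega>) c \<partial>P)
                      + ereal ((c - 1) / c) * \<Lambda> (1 / (c - 1)))"
proof (rule INF_greatest)
  interpret prob_space P by fact
  define Z where "Z = RN_deriv P Q"
  from assms(6) have ac: "absolutely_continuous P Q" "sets Q = sets P"
    and cgf_le: "\<And>l. l > 0 \<Longrightarrow> cgf Q (\<lambda>x. ext_log (Z x)) l \<le> \<Lambda> l"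
    by (auto simp: U_set_def Z_def)
  fix c :: real
  assume "c \<in> {1<..}"
  then have c: "c > 1" "c / (c - 1) > 1" "1/c + 1/(c / (c - 1)) = 1" "1 / (c - 1) + 1 = c / (c - 1)"
    by (auto simp: field_simps)
  have "ext_log (\<integral>\<^sup>+ \<omega>. \<tau> \<omega> \<partial>Q) = ext_log (\<integral>\<^sup>+x. \<tau> x * Z x \<partial>P)"
    using assms(2) ac by (simp add: Z_def RN_deriv_nn_integral mult.commute)
  also have "\<dots> \<le> ereal (1/c) * ext_log (\<integral>\<^sup>+x. ext_pow (\<tau> x) c \<partial>P)
      + ereal ((c - 1) / c) * ext_log (\<integral>\<^sup>+x. ext_pow (Z x) (c / (c - 1)) \<partial>P)"
    using ext_log_nn_integral_Holder[OF assms(2) _ c(1-3)] by (simp add: Z_def)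
  also have "\<dots> \<le> ereal (1/c) * ext_log (\<integral>\<^sup>+x. ext_pow (\<tau> x) c \<partial>P)
      + ereal ((c - 1) / c) * \<Lambda> (1 / (c - 1))"
  proof (intro add_left_mono ereal_mult_left_mono)
    show "ext_log (\<integral>\<^sup>+x. ext_pow (Z x) (c / (c - 1)) \<partial>P) \<le> \<Lambda> (1 / (c - 1))"
      using cgf_le[of "1 / (c - 1)"] cgf_ext_log_RN_deriv[OF ac, of "1 / (c - 1)"] c
      by (simp add: Z_def)
  qed (use c in simp)
  finally show "ext_log (\<integral>\<^sup>+ \<omega>. \<tau> \<omega> \<partial>Q) \<le> ereal (1 / c) * ext_log (\<integral>\<^sup>+ \<omega>. ext_pow (\<tau> \<omega>) c \<partial>P)
      + ereal ((c - 1) / c) * \<Lambda> (1 / (c - 1))" .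
qed

end
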